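(* The Burnside ring of finite racks $\mathrm{B}(\mathcal{R})$ admits the structure of a commutative ring with unit, with respect to a product satisfying $b(R')\,b(R)=b(R'\times R)$ for all finite racks $R,R'$, and with multiplicative identity $b(\star)$, the class of the one-element rack $\star$.
   Context: A rack is a set $R$ with a binary operation $\rhd$ such that every left multiplication $\ell_a\colon b\mapsto a\rhd b$ is a bijection and $a\rhd(b\rhd c)=(a\rhd b)\rhd(a\rhd c)$ for all $a,b,c$. The product $R'\times R$ of racks is the cartesian product with componentwise operation. A subrack is a subset $S$ with $\ell_s(S)=S$ for all $s\in S$; a decomposition of $R$ into $S$ and $T$ means $S,T$ are disjoint subracks (possibly empty) with $S\cup T=R$. $\mathrm{B}(\mathcal{R})$ is the abelian group generated by symbols $b(R)$, one for each finite rack $R$, subject to $b(R_1)=b(R_2)$ whenever $R_1\cong R_2$, and $b(R)=b(S)+b(T)$ whenever $R$ decomposes into $S$ and $T$. *)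

theory Defs
  imports "HOL-Algebra.Algebra"
begin

text \<open>A rack is given by a carrier set S and a binary operation f (values of f
outside S are irrelevant).\<close>

definition is_rack :: "'a set \<Rightarrow> ('a \<Rightarrow> 'a \<Rightarrow> 'a) \<Rightarrow> bool" where
  "is_rack S f \<longleftrightarrow>
     (\<forall>a\<in>S. bij_betw (f a) S S) \<and>
     (\<forall>a\<in>S. \<forall>b\<in>S. \<forall>c\<in>S. f a (f b c) = f (f a b) (f a c))"

definition finite_rack :: "'a set \<Rightarrow> ('a \<Rightarrow> 'a \<Rightarrow> 'a) \<Rightarrow> bool" where
  "finite_rack S f \<longleftrightarrow> is_rack S f \<and> finite S"

definition rack_iso :: "'a set \<Rightarrow> ('a \<Rightarrow> 'a \<Rightarrow> 'a) \<Rightarrow> 'b set \<Rightarrow> ('b \<Rightarrow> 'b \<Rightarrow> 'b) \<Rightarrow> bool" where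
  "rack_iso S f T g \<longleftrightarrow>
     (\<exists>h. bij_betw h S T \<and> (\<forall>a\<in>S. \<forall>b\<in>S. h (f a b) = g (h a) (h b)))"

definition subrack :: "'a set \<Rightarrow> 'a set \<Rightarrow> ('a \<Rightarrow> 'a \<Rightarrow> 'a) \<Rightarrow> bool" where
  "subrack T S f \<longleftrightarrow> T \<subseteq> S \<and> (\<forall>s\<in>T. f s ` T = T)"

definition rack_decomp :: "'a set \<Rightarrow> ('a \<Rightarrow> 'a \<Rightarrow> 'a) \<Rightarrow> 'a set \<Rightarrow> 'a set \<Rightarrow> bool" where
  "rack_decomp S f T U \<longleftrightarrow> subrack T S f \<and> subrack U S f \<and> T \<inter> U = {} \<and> T \<union> U = S"

text \<open>Every finite rack is isomorphic to one whose carrier is a finite set of naturals,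
so such racks serve as the generators b(R).\<close>

type_synonym nrack = "nat set \<times> (nat \<Rightarrow> nat \<Rightarrow> nat)"

definition nfinite_rack :: "nrack \<Rightarrow> bool" where
  "nfinite_rack R \<longleftrightarrow> finite_rack (fst R) (snd R)"

definition nrack_prod :: "nrack \<Rightarrow> nrack \<Rightarrow> nrack" where
  "nrack_prod R' R =
     (prod_encode ` (fst R' \<times> fst R),
      \<lambda>u v. prod_encode (snd R' (fst (prod_decode u)) (fst (prod_decode v)),
                         snd R (snd (prod_decode u)) (snd (prod_decode v))))"

definition star_rack :: nrack where
  "star_rack = ({0}, \<lambda>a b. 0)"

definition free_carrier :: "(nrack \<Rightarrow> int) set" where
  "free_carrier = {x. finite {R. x R \<noteq> 0} \<and> (\<forall>R. x R \<noteq> 0 \<longrightarrow> nfinite_rack R)}"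

definition free_group :: "(nrack \<Rightarrow> int) monoid" where
  "free_group = \<lparr>carrier = free_carrier, monoid.mult = (\<lambda>x y R. x R + y R), one = (\<lambda>R. 0)\<rparr>"

definition gen :: "nrack \<Rightarrow> (nrack \<Rightarrow> int)" where
  "gen R = (\<lambda>Q. if Q = R then 1 else 0)"

definition burnside_relators :: "(nrack \<Rightarrow> int) set" where
  "burnside_relators =
     {(\<lambda>Q. gen R1 Q - gen R2 Q) | R1 R2.
        nfinite_rack R1 \<and> nfinite_rack R2 \<and> rack_iso (fst R1) (snd R1) (fst R2) (snd R2)}
   \<union> {(\<lambda>Q. gen (S0, f) Q - gen (T, f) Q - gen (U, f) Q) | S0 f T U.
        finite_rack S0 f \<and> rack_decomp S0 f T U}"

definition burnside_relations :: "(nrack \<Rightarrow> int) set" where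
  "burnside_relations = generate free_group burnside_relators"

text \<open>B(R) as the quotient group (written multiplicatively in HOL-Algebra, i.e. its
group operation is the addition of B(R)).\<close>
definition burnside_group :: "(nrack \<Rightarrow> int) set monoid" where
  "burnside_group = free_group Mod burnside_relations"

definition bclass :: "nrack \<Rightarrow> (nrack \<Rightarrow> int) set" where
  "bclass R = burnside_relations #>\<^bsub>free_group\<^esub> gen R"

end

theory Submission
  imports Defs "HOL-Library.Function_Algebras"
begin

(* B(R) is the quotient of the free abelian group on finite racks by the subgroup N generated
   by the relators. The product of racks extends bilinearly to the free abelian group.
   Multiplication by a fixed rack preserves isomorphisms and decompositions, hence maps
   relators to relators, so N is an ideal and the product descends to the quotient. There it
   is commutative, associative and unital because R' x R, (R x R') x R'' and star x R are
   isomorphic to R x R', R x (R' x R'') and R: each of these identities holds modulo N on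
   generators and hence, by additivity, on the whole group. *)

section \<open>Products of racks with carrier in nat\<close>

abbreviation nrack_iso :: "nrack \<Rightarrow> nrack \<Rightarrow> bool" where
  "nrack_iso R R' \<equiv> rack_iso (fst R) (snd R) (fst R') (snd R')"

lemma fst_nrack_prod: "fst (nrack_prod A B) = prod_encode ` (fst A \<times> fst B)"
  by (simp add: nrack_prod_def)

lemma snd_nrack_prod_encode [simp]:
  "snd (nrack_prod A B) (prod_encode (a, b)) (prod_encode (c, d))
     = prod_encode (snd A a c, snd B b d)"
  by (simp add: nrack_prod_def prod_encode_inverse)

lemma snd_nrack_prod_indep_carrier: "snd (nrack_prod (S, f) B) = snd (nrack_prod (T, f) B)"
  by (simp add: nrack_prod_def)

lemma bij_betw_prod_encode_conj:
  assumes "bij_betw k A A'"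
  shows "bij_betw (\<lambda>u. prod_encode (k (prod_decode u))) (prod_encode ` A) (prod_encode ` A')"
proof -
  have "bij_betw prod_decode (prod_encode ` A) A"
    by (rule bij_betw_imageI) (auto simp: inj_on_def prod_encode_inverse image_image)
  moreover have "bij_betw prod_encode A' (prod_encode ` A')"
    by (rule bij_betw_imageI) (auto simp: inj_on_def)
  ultimately have "bij_betw (prod_encode \<circ> k \<circ> prod_decode) (prod_encode ` A) (prod_encode ` A')"
    using assms by (blast intro: bij_betw_trans)
  then show ?thesis by (simp add: comp_def)
qed

lemma is_rack_nrack_prod:
  assumes "is_rack (fst A) (snd A)" "is_rack (fst B) (snd B)"
  shows "is_rack (fst (nrack_prod A B)) (snd (nrack_prod A B))"
  unfolding is_rack_def fst_nrack_prod
proof (intro conjI ballI)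
  fix u assume "u \<in> prod_encode ` (fst A \<times> fst B)"
  then obtain a b where u: "u = prod_encode (a, b)" "a \<in> fst A" "b \<in> fst B" by auto
  have "bij_betw (map_prod (snd A a) (snd B b)) (fst A \<times> fst B) (fst A \<times> fst B)"
    using assms u by (intro bij_betw_map_prod) (auto simp: is_rack_def)
  from bij_betw_prod_encode_conj[OF this]
  show "bij_betw (snd (nrack_prod A B) u)
      (prod_encode ` (fst A \<times> fst B)) (prod_encode ` (fst A \<times> fst B))"
    by (rule bij_betw_cong[THEN iffD1, rotated]) (auto simp: u)
next
  fix u v w assume "u \<in> prod_encode ` (fst A \<times> fst B)" "v \<in> prod_encode ` (fst A \<times> fst B)"
    "w \<in> prod_encode ` (fst A \<times> fst B)"
  then show "snd (nrack_prod A B) u (snd (nrack_prod A B) v w) =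
      snd (nrack_prod A B) (snd (nrack_prod A B) u v) (snd (nrack_prod A B) u w)"
    using assms by (auto simp: is_rack_def)
qed

lemma nfinite_rack_nrack_prod:
  "nfinite_rack A \<Longrightarrow> nfinite_rack B \<Longrightarrow> nfinite_rack (nrack_prod A B)"
  using is_rack_nrack_prod[of A B] by (auto simp: nfinite_rack_def finite_rack_def fst_nrack_prod)

lemma nfinite_rack_star_rack: "nfinite_rack star_rack"
  by (simp add: nfinite_rack_def finite_rack_def is_rack_def star_rack_def bij_betw_def inj_on_def)

lemma nrack_iso_prod_swap: "nrack_iso (nrack_prod A B) (nrack_prod B A)"
  unfolding rack_iso_def fst_nrack_prod
proof (intro exI conjI)
  let ?h = "\<lambda>u. prod_encode (prod.swap (prod_decode u))"
  show "bij_betw ?h (prod_encode ` (fst A \<times> fst B)) (prod_encode ` (fst B \<times> fst A))"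
    by (rule bij_betw_byWitness[where f'="?h"]) (auto simp: prod_encode_inverse)
qed (auto simp: prod_encode_inverse)

lemma nrack_iso_prod_assoc:
  "nrack_iso (nrack_prod (nrack_prod A B) C) (nrack_prod A (nrack_prod B C))"
  unfolding rack_iso_def fst_nrack_prod
proof (intro exI conjI)
  let ?h = "\<lambda>u. case prod_decode u of (v, c) \<Rightarrow> case prod_decode v of (a, b) \<Rightarrow>
              prod_encode (a, prod_encode (b, c))"
  let ?k = "\<lambda>u. case prod_decode u of (a, v) \<Rightarrow> case prod_decode v of (b, c) \<Rightarrow>
              prod_encode (prod_encode (a, b), c)"
  show "bij_betw ?h (prod_encode ` (prod_encode ` (fst A \<times> fst B) \<times> fst C))
                    (prod_encode ` (fst A \<times> prod_encode ` (fst B \<times> fst C)))"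
    by (rule bij_betw_byWitness[where f'="?k"]) (auto simp: prod_encode_inverse)
qed (auto simp: prod_encode_inverse)

lemma nrack_iso_star_prod: "nrack_iso (nrack_prod star_rack A) A"
  unfolding rack_iso_def fst_nrack_prod
proof (intro exI conjI)
  show "bij_betw (\<lambda>u. snd (prod_decode u)) (prod_encode ` (fst star_rack \<times> fst A)) (fst A)"
    by (rule bij_betw_byWitness[where f'="\<lambda>a. prod_encode (0, a)"])
      (auto simp: prod_encode_inverse star_rack_def)
qed (auto simp: prod_encode_inverse)

lemma nrack_iso_prod_cong_left:
  assumes "nrack_iso A A'"
  shows "nrack_iso (nrack_prod A B) (nrack_prod A' B)"
proof -
  from assms obtain k where k: "bij_betw k (fst A) (fst A')"
    "\<forall>a\<in>fst A. \<forall>b\<in>fst A. k (snd A a b) = snd A' (k a) (k b)"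
    by (auto simp: rack_iso_def)
  have "bij_betw (map_prod k id) (fst A \<times> fst B) (fst A' \<times> fst B)"
    using k(1) by (intro bij_betw_map_prod) auto
  from bij_betw_prod_encode_conj[OF this] k(2) show ?thesis
    unfolding rack_iso_def fst_nrack_prod by (intro exI conjI) (auto simp: prod_encode_inverse)
qed

lemma subrack_nrack_prod:
  assumes "subrack T S f" "is_rack (fst B) (snd B)"
  shows "subrack (fst (nrack_prod (T, f) B))
           (fst (nrack_prod (S, f) B)) (snd (nrack_prod (S, f) B))"
  unfolding subrack_def fst_nrack_prod fst_conv
proof (intro conjI ballI)
  show "prod_encode ` (T \<times> fst B) \<subseteq> prod_encode ` (S \<times> fst B)"
    using assms(1) by (auto simp: subrack_def)
next
  fix u assume "u \<in> prod_encode ` (T \<times> fst B)"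
  then obtain t b where u: "u = prod_encode (t, b)" "t \<in> T" "b \<in> fst B" by auto
  have "snd (nrack_prod (S, f) B) u ` prod_encode ` (T \<times> fst B)
      = prod_encode ` map_prod (f t) (snd B b) ` (T \<times> fst B)"
    unfolding image_image u by (rule image_cong) auto
  also have "map_prod (f t) (snd B b) ` (T \<times> fst B) = T \<times> fst B"
    using assms u by (intro map_prod_surj_on) (auto simp: subrack_def is_rack_def bij_betw_def)
  finally show "snd (nrack_prod (S, f) B) u ` prod_encode ` (T \<times> fst B)
      = prod_encode ` (T \<times> fst B)" .
qed

lemma rack_decomp_nrack_prod:
  assumes "rack_decomp S f T U" "is_rack (fst B) (snd B)"
  shows "rack_decomp (fst (nrack_prod (S, f) B)) (snd (nrack_prod (S, f) B))
           (fst (nrack_prod (T, f) B)) (fst (nrack_prod (U, f) B))"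
  using assms subrack_nrack_prod[OF _ assms(2), of _ S f]
  unfolding rack_decomp_def fst_nrack_prod fst_conv by (auto simp: prod_encode_eq)

section \<open>The free abelian group on finite racks and its product\<close>

definition frag_bilinear ::
    "('a \<Rightarrow> 'b \<Rightarrow> 'c) \<Rightarrow> ('a \<Rightarrow>\<^sub>0 int) \<Rightarrow> ('b \<Rightarrow>\<^sub>0 int) \<Rightarrow> 'c \<Rightarrow>\<^sub>0 int" where
  "frag_bilinear m c d = frag_extend (\<lambda>a. frag_extend (\<lambda>b. frag_of (m a b)) d) c"

lemma frag_extend_fun_diff: "frag_extend (\<lambda>a. f a - g a) c = frag_extend f c - frag_extend g c"
  using subset_UNIV by (induction c rule: frag_induction) (auto simp: frag_extend_diff)

lemma frag_bilinear_of [simp]: "frag_bilinear m (frag_of a) (frag_of b) = frag_of (m a b)"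
  by (simp add: frag_bilinear_def)

lemma frag_bilinear_diff_left:
  "frag_bilinear m (c - c') d = frag_bilinear m c d - frag_bilinear m c' d"
  by (simp add: frag_bilinear_def frag_extend_diff)

lemma frag_bilinear_diff_right:
  "frag_bilinear m c (d - d') = frag_bilinear m c d - frag_bilinear m c d'"
  by (simp add: frag_bilinear_def frag_extend_diff frag_extend_fun_diff)

lemma keys_frag_bilinear:
  "Poly_Mapping.keys (frag_bilinear m c d)
     \<subseteq> (\<Union>a \<in> Poly_Mapping.keys c. \<Union>b \<in> Poly_Mapping.keys d. {m a b})"
proof -
  have "Poly_Mapping.keys (frag_extend (\<lambda>b. frag_of (m a b)) d)
      \<subseteq> (\<Union>b \<in> Poly_Mapping.keys d. {m a b})" for a
    using keys_frag_extend[of "\<lambda>b. frag_of (m a b)" d] by simp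
  then show ?thesis
    unfolding frag_bilinear_def by (intro order_trans[OF keys_frag_extend] UN_mono) auto
qed

abbreviation finite_racks :: "nrack set" where
  "finite_racks \<equiv> {R. nfinite_rack R}"

lemma free_group_simps [simp]:
  "carrier free_group = free_carrier"
  "x \<otimes>\<^bsub>free_group\<^esub> y = x + y"
  "\<one>\<^bsub>free_group\<^esub> = 0"
  by (auto simp: free_group_def fun_eq_iff)

lemma lookup_in_free_carrier_iff:
  "Poly_Mapping.lookup c \<in> free_carrier \<longleftrightarrow> Poly_Mapping.keys c \<subseteq> finite_racks"
  by (auto simp: free_carrier_def keys.rep_eq)

lemma free_carrierE:
  assumes "x \<in> free_carrier"
  obtains c where "x = Poly_Mapping.lookup c" "Poly_Mapping.keys c \<subseteq> finite_racks"
proof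
  have "finite {R. x R \<noteq> 0}" using assms by (simp add: free_carrier_def)
  then show "x = Poly_Mapping.lookup (Abs_poly_mapping x)" by simp
  then show "Poly_Mapping.keys (Abs_poly_mapping x) \<subseteq> finite_racks"
    using assms lookup_in_free_carrier_iff by metis
qed

lemma lookup_diff: "Poly_Mapping.lookup (c - d) = Poly_Mapping.lookup c - Poly_Mapping.lookup d"
  by (simp add: fun_eq_iff lookup_minus)

lemma lookup_frag_of_gen: "Poly_Mapping.lookup (frag_of R) = gen R"
  by (simp add: gen_def)

lemma free_carrier_diff:
  assumes "x \<in> free_carrier" "y \<in> free_carrier"
  shows "x - y \<in> free_carrier"
proof -
  obtain c where c: "x = Poly_Mapping.lookup c" "Poly_Mapping.keys c \<subseteq> finite_racks"
    using assms(1) by (rule free_carrierE)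
  obtain d where d: "y = Poly_Mapping.lookup d" "Poly_Mapping.keys d \<subseteq> finite_racks"
    using assms(2) by (rule free_carrierE)
  have "Poly_Mapping.keys (c - d) \<subseteq> finite_racks"
    using keys_diff[of c d] c(2) d(2) by blast
  then show ?thesis
    by (simp add: c(1) d(1) lookup_in_free_carrier_iff flip: lookup_diff)
qed

lemma free_carrier_zero: "0 \<in> free_carrier"
  by (simp add: free_carrier_def)

lemma free_carrier_uminus: "x \<in> free_carrier \<Longrightarrow> - x \<in> free_carrier"
  using free_carrier_diff[OF free_carrier_zero] by fastforce

lemma free_carrier_add: "x \<in> free_carrier \<Longrightarrow> y \<in> free_carrier \<Longrightarrow> x + y \<in> free_carrier"
  using free_carrier_diff[OF _ free_carrier_uminus] by fastforce

lemma gen_in_free_carrier: "nfinite_rack R \<Longrightarrow> gen R \<in> free_carrier"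
  using lookup_in_free_carrier_iff[of "frag_of R"] by (simp add: gen_def)

lemma comm_group_free_group: "comm_group free_group"
proof (rule comm_groupI)
  fix x assume "x \<in> carrier free_group"
  then show "\<exists>y\<in>carrier free_group. y \<otimes>\<^bsub>free_group\<^esub> x = \<one>\<^bsub>free_group\<^esub>"
    by (intro bexI[of _ "- x"]) (simp_all add: free_carrier_uminus)
qed (simp_all add: free_carrier_add free_carrier_zero add.assoc add.commute)

lemma group_free_group: "group free_group"
  using comm_group_free_group by (simp add: comm_group_def)

lemma inv_free_group: "x \<in> free_carrier \<Longrightarrow> inv\<^bsub>free_group\<^esub> x = - x"
  by (intro group.inv_equality[OF group_free_group]) (simp_all add: free_carrier_uminus)

lemma free_carrier_induct [consumes 1, case_names zero gen diff]:
  assumes "x \<in> free_carrier"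
    and "Q 0"
    and "\<And>R. nfinite_rack R \<Longrightarrow> Q (gen R)"
    and "\<And>x y. x \<in> free_carrier \<Longrightarrow> y \<in> free_carrier \<Longrightarrow> Q x \<Longrightarrow> Q y \<Longrightarrow> Q (x - y)"
  shows "Q x"
proof -
  obtain c where c: "x = Poly_Mapping.lookup c" "Poly_Mapping.keys c \<subseteq> finite_racks"
    using assms(1) by (rule free_carrierE)
  have "Q (Poly_Mapping.lookup c)"
  proof (rule free_Abelian_group_induct[OF c(2), where P = "\<lambda>c. Q (Poly_Mapping.lookup c)"])
    have "Poly_Mapping.lookup (0 :: nrack \<Rightarrow>\<^sub>0 int) = 0"
      by (simp add: fun_eq_iff)
    then show "Q (Poly_Mapping.lookup 0)"
      using assms(2) by simp
  next
    fix a b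
    assume "Poly_Mapping.keys a \<subseteq> finite_racks" "Poly_Mapping.keys b \<subseteq> finite_racks"
      "Q (Poly_Mapping.lookup a)" "Q (Poly_Mapping.lookup b)"
    then show "Q (Poly_Mapping.lookup (a - b))"
      using assms(4) by (simp add: lookup_diff lookup_in_free_carrier_iff)
  next
    fix R assume "R \<in> finite_racks"
    then show "Q (Poly_Mapping.lookup (frag_of R))"
      using assms(3) by (simp add: gen_def)
  qed
  then show ?thesis using c(1) by simp
qed

(* Abs_poly_mapping inverts lookup on free_carrier (see free_carrierE); the value of
   free_mult outside free_carrier is irrelevant. *)
definition free_mult :: "(nrack \<Rightarrow> int) \<Rightarrow> (nrack \<Rightarrow> int) \<Rightarrow> nrack \<Rightarrow> int" where
  "free_mult x y =
     Poly_Mapping.lookup (frag_bilinear nrack_prod (Abs_poly_mapping x) (Abs_poly_mapping y))"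

lemma free_mult_lookup:
  "free_mult (Poly_Mapping.lookup c) (Poly_Mapping.lookup d)
     = Poly_Mapping.lookup (frag_bilinear nrack_prod c d)"
  by (simp add: free_mult_def)

lemma free_mult_gen: "free_mult (gen A) (gen B) = gen (nrack_prod A B)"
  by (metis free_mult_lookup frag_bilinear_of lookup_frag_of_gen)

lemma free_mult_closed:
  assumes "x \<in> free_carrier" "y \<in> free_carrier"
  shows "free_mult x y \<in> free_carrier"
proof -
  obtain c where c: "x = Poly_Mapping.lookup c" "Poly_Mapping.keys c \<subseteq> finite_racks"
    using assms(1) by (rule free_carrierE)
  obtain d where d: "y = Poly_Mapping.lookup d" "Poly_Mapping.keys d \<subseteq> finite_racks"
    using assms(2) by (rule free_carrierE)
  have "Poly_Mapping.keys (frag_bilinear nrack_prod c d) \<subseteq> finite_racks"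
    using keys_frag_bilinear[of nrack_prod c d] c(2) d(2) nfinite_rack_nrack_prod by blast
  then show ?thesis
    by (simp add: c(1) d(1) free_mult_lookup lookup_in_free_carrier_iff)
qed

lemma free_mult_diff_left:
  "\<lbrakk>x \<in> free_carrier; x' \<in> free_carrier; y \<in> free_carrier\<rbrakk>
   \<Longrightarrow> free_mult (x - x') y = free_mult x y - free_mult x' y"
  by (elim free_carrierE) (simp add: free_mult_lookup frag_bilinear_diff_left flip: lookup_diff)

lemma free_mult_diff_right:
  "\<lbrakk>x \<in> free_carrier; y \<in> free_carrier; y' \<in> free_carrier\<rbrakk>
   \<Longrightarrow> free_mult x (y - y') = free_mult x y - free_mult x y'"
  by (elim free_carrierE) (simp add: free_mult_lookup frag_bilinear_diff_right flip: lookup_diff)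

section \<open>The relation subgroup is an ideal\<close>

lemma finite_rack_subrack: "finite_rack S f \<Longrightarrow> subrack T S f \<Longrightarrow> finite_rack T f"
  unfolding finite_rack_def is_rack_def subrack_def bij_betw_def
  by (meson finite_subset inj_on_subset subsetD)

lemma iso_relator:
  "nfinite_rack R \<Longrightarrow> nfinite_rack R' \<Longrightarrow> nrack_iso R R' \<Longrightarrow> gen R - gen R' \<in> burnside_relators"
  unfolding burnside_relators_def fun_diff_def by blast

lemma decomp_relator:
  "finite_rack S f \<Longrightarrow> rack_decomp S f T U \<Longrightarrow> gen (S, f) - gen (T, f) - gen (U, f) \<in> burnside_relators"
  unfolding burnside_relators_def fun_diff_def by blast

lemma burnside_relatorsE:
  assumes "h \<in> burnside_relators"
  obtains (iso) R R' where "nfinite_rack R" "nfinite_rack R'" "nrack_iso R R'" "h = gen R - gen R'"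
  | (decomp) S f T U where "finite_rack S f" "rack_decomp S f T U"
      "h = gen (S, f) - gen (T, f) - gen (U, f)"
  using assms unfolding burnside_relators_def fun_diff_def by blast

lemma burnside_relators_subset: "burnside_relators \<subseteq> free_carrier"
proof
  fix h assume "h \<in> burnside_relators"
  then show "h \<in> free_carrier"
  proof (cases rule: burnside_relatorsE)
    case (decomp S f T U)
    then have "finite_rack T f" "finite_rack U f"
      by (auto simp: rack_decomp_def intro: finite_rack_subrack)
    with decomp show ?thesis
      by (simp add: nfinite_rack_def free_carrier_diff gen_in_free_carrier)
  qed (simp add: free_carrier_diff gen_in_free_carrier)
qed

lemma subgroup_burnside_relations: "subgroup burnside_relations free_group"
  unfolding burnside_relations_def using burnside_relators_subset
  by (intro group.generate_is_subgroup[OF group_free_group]) simp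

lemma burnside_relations_subset: "burnside_relations \<subseteq> free_carrier"
  using subgroup.subset[OF subgroup_burnside_relations] by simp

lemma relator_in_burnside_relations: "h \<in> burnside_relators \<Longrightarrow> h \<in> burnside_relations"
  unfolding burnside_relations_def by (rule generate.incl)

lemma burnside_relations_zero: "0 \<in> burnside_relations"
  using subgroup.one_closed[OF subgroup_burnside_relations] by simp

lemma burnside_relations_add:
  "n \<in> burnside_relations \<Longrightarrow> m \<in> burnside_relations \<Longrightarrow> n + m \<in> burnside_relations"
  using subgroup.m_closed[OF subgroup_burnside_relations] by simp

lemma burnside_relations_uminus:
  assumes "n \<in> burnside_relations"
  shows "- n \<in> burnside_relations"
proof -
  have "inv\<^bsub>free_group\<^esub> n \<in> burnside_relations"
    using subgroup_burnside_relations assms by (rule subgroup.m_inv_closed)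
  moreover have "n \<in> free_carrier"
    using assms burnside_relations_subset by blast
  ultimately show ?thesis
    by (simp add: inv_free_group)
qed

lemma burnside_relations_diff:
  "n \<in> burnside_relations \<Longrightarrow> m \<in> burnside_relations \<Longrightarrow> n - m \<in> burnside_relations"
  using burnside_relations_add[OF _ burnside_relations_uminus] by fastforce

definition free_additive :: "((nrack \<Rightarrow> int) \<Rightarrow> nrack \<Rightarrow> int) \<Rightarrow> bool" where
  "free_additive \<phi> \<longleftrightarrow> \<phi> ` free_carrier \<subseteq> free_carrier \<and>
     (\<forall>x\<in>free_carrier. \<forall>y\<in>free_carrier. \<phi> (x - y) = \<phi> x - \<phi> y)"

lemma free_additive_zero: "free_additive \<phi> \<Longrightarrow> \<phi> 0 = 0"
  unfolding free_additive_def using free_carrier_zero by (metis diff_self)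

lemma free_additive_id: "free_additive (\<lambda>x. x)"
  by (simp add: free_additive_def)

lemma free_additive_diff: "free_additive \<phi> \<Longrightarrow> free_additive \<psi> \<Longrightarrow> free_additive (\<lambda>x. \<phi> x - \<psi> x)"
  unfolding free_additive_def by (auto simp: image_subset_iff free_carrier_diff)

lemma free_additive_comp: "free_additive \<phi> \<Longrightarrow> free_additive \<psi> \<Longrightarrow> free_additive (\<lambda>x. \<phi> (\<psi> x))"
  unfolding free_additive_def by (auto simp: image_subset_iff)

lemma free_additive_free_mult_left: "y \<in> free_carrier \<Longrightarrow> free_additive (\<lambda>x. free_mult x y)"
  by (simp add: free_additive_def free_mult_closed free_mult_diff_left image_subset_iff)

lemma free_additive_free_mult_right: "x \<in> free_carrier \<Longrightarrow> free_additive (free_mult x)"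
  by (simp add: free_additive_def free_mult_closed free_mult_diff_right image_subset_iff)

lemma free_additive_uminus:
  assumes "free_additive \<phi>" "x \<in> free_carrier"
  shows "\<phi> (- x) = - \<phi> x"
proof -
  have "\<phi> (0 - x) = \<phi> 0 - \<phi> x"
    using assms free_carrier_zero unfolding free_additive_def by blast
  then show ?thesis
    by (simp add: free_additive_zero[OF assms(1)])
qed

lemma free_additive_add:
  assumes "free_additive \<phi>" "x \<in> free_carrier" "y \<in> free_carrier"
  shows "\<phi> (x + y) = \<phi> x + \<phi> y"
proof -
  have "\<phi> (x - - y) = \<phi> x - \<phi> (- y)"
    using assms free_carrier_uminus unfolding free_additive_def by blast
  then show ?thesis
    by (simp add: free_additive_uminus[OF assms(1,3)])
qed

lemma subgroup_free_additive_vimage: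
  assumes "free_additive \<phi>"
  shows "subgroup {x \<in> free_carrier. \<phi> x \<in> burnside_relations} free_group"
proof (rule group.subgroupI)
  show "group free_group"
    by (rule group_free_group)
  have "0 \<in> {x \<in> free_carrier. \<phi> x \<in> burnside_relations}"
    by (simp add: free_carrier_zero burnside_relations_zero free_additive_zero[OF assms])
  then show "{x \<in> free_carrier. \<phi> x \<in> burnside_relations} \<noteq> {}"
    by blast
next
  fix a assume "a \<in> {x \<in> free_carrier. \<phi> x \<in> burnside_relations}"
  then show "inv\<^bsub>free_group\<^esub> a \<in> {x \<in> free_carrier. \<phi> x \<in> burnside_relations}"
    by (simp add: inv_free_group free_carrier_uminus free_additive_uminus[OF assms]
        burnside_relations_uminus)
next
  fix a b
  assume "a \<in> {x \<in> free_carrier. \<phi> x \<in> burnside_relations}"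
    and "b \<in> {x \<in> free_carrier. \<phi> x \<in> burnside_relations}"
  then show "a \<otimes>\<^bsub>free_group\<^esub> b \<in> {x \<in> free_carrier. \<phi> x \<in> burnside_relations}"
    by (simp add: free_carrier_add free_additive_add[OF assms] burnside_relations_add)
qed (simp add: subset_iff)

lemma free_additive_in_relations:
  assumes "free_additive \<phi>"
    and gen: "\<And>R. nfinite_rack R \<Longrightarrow> \<phi> (gen R) \<in> burnside_relations"
    and "x \<in> free_carrier"
  shows "\<phi> x \<in> burnside_relations"
proof (rule free_carrier_induct[OF assms(3), where Q = "\<lambda>x. \<phi> x \<in> burnside_relations"])
  show "\<phi> 0 \<in> burnside_relations"
    by (simp add: free_additive_zero[OF assms(1)] burnside_relations_zero)
next
  fix x y
  assume "x \<in> free_carrier" "y \<in> free_carrier" "\<phi> x \<in> burnside_relations" "\<phi> y \<in> burnside_relations"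
  then show "\<phi> (x - y) \<in> burnside_relations"
    using assms(1) by (simp add: free_additive_def burnside_relations_diff)
qed (rule gen)

lemma free_additive_eq_mod_relations:
  assumes "free_additive \<phi>" "free_additive \<psi>"
    and "\<And>R. nfinite_rack R \<Longrightarrow> \<phi> (gen R) - \<psi> (gen R) \<in> burnside_relations"
    and "x \<in> free_carrier"
  shows "\<phi> x - \<psi> x \<in> burnside_relations"
  using free_additive_in_relations[where \<phi> = "\<lambda>x. \<phi> x - \<psi> x"]
    free_additive_diff[OF assms(1,2)] assms(3,4)
  by blast

lemma free_mult_relator_gen:
  assumes "h \<in> burnside_relators" "nfinite_rack B"
  shows "free_mult h (gen B) \<in> burnside_relators"
  using assms(1)
proof (cases rule: burnside_relatorsE)
  case (iso R R')
  with assms(2) have "free_mult h (gen B) = gen (nrack_prod R B) - gen (nrack_prod R' B)"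
    by (simp add: free_mult_diff_left gen_in_free_carrier free_mult_gen)
  with iso assms(2) show ?thesis
    by (simp add: iso_relator nfinite_rack_nrack_prod nrack_iso_prod_cong_left)
next
  case (decomp S f T U)
  \<comment> \<open>the three products share the operation \<open>?F\<close>, as \<open>decomp_relator\<close> requires\<close>
  let ?F = "snd (nrack_prod (S, f) B)"
  have prod_eq: "nrack_prod (V, f) B = (fst (nrack_prod (V, f) B), ?F)" for V
    by (metis prod.collapse snd_nrack_prod_indep_carrier)
  have "finite_rack T f" "finite_rack U f"
    using decomp by (auto simp: rack_decomp_def intro: finite_rack_subrack)
  with decomp assms(2) have "free_mult h (gen B) =
      gen (nrack_prod (S, f) B) - gen (nrack_prod (T, f) B) - gen (nrack_prod (U, f) B)"
    by (simp add: free_mult_diff_left gen_in_free_carrier free_carrier_diff nfinite_rack_def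
        free_mult_gen)
  also have "\<dots> = gen (fst (nrack_prod (S, f) B), ?F) - gen (fst (nrack_prod (T, f) B), ?F)
      - gen (fst (nrack_prod (U, f) B), ?F)"
    by (subst (1 2 3) prod_eq) simp
  also have "\<dots> \<in> burnside_relators"
  proof (rule decomp_relator)
    show "finite_rack (fst (nrack_prod (S, f) B)) ?F"
      using nfinite_rack_nrack_prod[of "(S, f)" B] decomp(1) assms(2)
      by (simp add: nfinite_rack_def)
    show "rack_decomp (fst (nrack_prod (S, f) B)) ?F
        (fst (nrack_prod (T, f) B)) (fst (nrack_prod (U, f) B))"
      using rack_decomp_nrack_prod decomp(2) assms(2)
      by (simp add: nfinite_rack_def finite_rack_def)
  qed
  finally show ?thesis .
qed

lemma free_mult_relator:
  assumes "h \<in> burnside_relators" "y \<in> free_carrier"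
  shows "free_mult h y \<in> burnside_relations"
proof -
  have "h \<in> free_carrier"
    using assms(1) burnside_relators_subset by blast
  then have "free_additive (free_mult h)"
    by (rule free_additive_free_mult_right)
  then show ?thesis
  proof (rule free_additive_in_relations)
    show "free_mult h (gen R) \<in> burnside_relations" if "nfinite_rack R" for R
      using free_mult_relator_gen[OF assms(1) that] by (rule relator_in_burnside_relations)
  qed (rule assms(2))
qed

lemma free_mult_relations_left:
  assumes "n \<in> burnside_relations" "y \<in> free_carrier"
  shows "free_mult n y \<in> burnside_relations"
proof -
  have "generate free_group burnside_relators
      \<subseteq> {x \<in> free_carrier. free_mult x y \<in> burnside_relations}"
  proof (rule group.generate_subgroup_incl)
    show "group free_group"
      by (rule group_free_group)
    show "burnside_relators \<subseteq> {x \<in> free_carrier. free_mult x y \<in> burnside_relations}"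
      using burnside_relators_subset free_mult_relator[OF _ assms(2)] by auto
    show "subgroup {x \<in> free_carrier. free_mult x y \<in> burnside_relations} free_group"
      using free_additive_free_mult_left[OF assms(2)] by (rule subgroup_free_additive_vimage)
  qed
  with assms(1) show ?thesis
    by (auto simp only: burnside_relations_def[symmetric])
qed

lemma iso_in_burnside_relations:
  "nfinite_rack R \<Longrightarrow> nfinite_rack R' \<Longrightarrow> nrack_iso R R' \<Longrightarrow> gen R - gen R' \<in> burnside_relations"
  by (intro relator_in_burnside_relations iso_relator)

lemma free_mult_comm_mod_relations:
  assumes "x \<in> free_carrier" "y \<in> free_carrier"
  shows "free_mult x y - free_mult y x \<in> burnside_relations"
proof -
  have gen_left: "free_mult (gen A) y - free_mult y (gen A) \<in> burnside_relations"
    if "nfinite_rack A" for A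
  proof (rule free_additive_eq_mod_relations[OF free_additive_free_mult_right
        free_additive_free_mult_left])
    fix B assume "nfinite_rack B"
    with that show "free_mult (gen A) (gen B) - free_mult (gen B) (gen A) \<in> burnside_relations"
      by (simp add: free_mult_gen iso_in_burnside_relations nfinite_rack_nrack_prod
          nrack_iso_prod_swap)
  qed (simp_all add: that gen_in_free_carrier assms(2))
  show ?thesis
    by (rule free_additive_eq_mod_relations[OF free_additive_free_mult_left
          free_additive_free_mult_right])
      (simp_all add: gen_left assms)
qed

lemma free_mult_relations_right:
  assumes "x \<in> free_carrier" "n \<in> burnside_relations"
  shows "free_mult x n \<in> burnside_relations"
proof -
  have "n \<in> free_carrier"
    using assms(2) burnside_relations_subset by blast
  then have "free_mult x n = free_mult n x - (free_mult n x - free_mult x n)"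
    by simp
  also have "\<dots> \<in> burnside_relations"
    using assms \<open>n \<in> free_carrier\<close>
    by (intro burnside_relations_diff free_mult_relations_left free_mult_comm_mod_relations)
  finally show ?thesis .
qed

lemma free_mult_star_mod_relations:
  assumes "x \<in> free_carrier"
  shows "free_mult (gen star_rack) x - x \<in> burnside_relations"
proof (rule free_additive_eq_mod_relations[OF free_additive_free_mult_right free_additive_id])
  fix R assume "nfinite_rack R"
  then show "free_mult (gen star_rack) (gen R) - gen R \<in> burnside_relations"
    by (simp add: free_mult_gen iso_in_burnside_relations nfinite_rack_nrack_prod
        nfinite_rack_star_rack nrack_iso_star_prod)
qed (simp_all add: assms gen_in_free_carrier nfinite_rack_star_rack)

lemma free_mult_assoc_mod_relations:
  assumes "x \<in> free_carrier" "y \<in> free_carrier" "z \<in> free_carrier"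
  shows "free_mult (free_mult x y) z - free_mult x (free_mult y z) \<in> burnside_relations"
proof -
  have gens_AB:
    "free_mult (gen (nrack_prod A B)) z - free_mult (gen A) (free_mult (gen B) z) \<in> burnside_relations"
    if AB: "nfinite_rack A" "nfinite_rack B" for A B
  proof (rule free_additive_eq_mod_relations[where \<phi> = "free_mult (gen (nrack_prod A B))"
        and \<psi> = "\<lambda>z. free_mult (gen A) (free_mult (gen B) z)"])
    show "free_additive (free_mult (gen (nrack_prod A B)))"
      using AB by (intro free_additive_free_mult_right gen_in_free_carrier nfinite_rack_nrack_prod)
    show "free_additive (\<lambda>z. free_mult (gen A) (free_mult (gen B) z))"
      using AB
      by (intro free_additive_comp[OF free_additive_free_mult_right free_additive_free_mult_right]
          gen_in_free_carrier)
    show "free_mult (gen (nrack_prod A B)) (gen C) - free_mult (gen A) (free_mult (gen B) (gen C))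
        \<in> burnside_relations" if "nfinite_rack C" for C
      using AB that
      by (simp add: free_mult_gen iso_in_burnside_relations nfinite_rack_nrack_prod
          nrack_iso_prod_assoc)
  qed (rule assms(3))
  have gen_A:
    "free_mult (free_mult (gen A) y) z - free_mult (gen A) (free_mult y z) \<in> burnside_relations"
    if A: "nfinite_rack A" for A
  proof (rule free_additive_eq_mod_relations[where \<phi> = "\<lambda>y. free_mult (free_mult (gen A) y) z"
        and \<psi> = "\<lambda>y. free_mult (gen A) (free_mult y z)"])
    show "free_additive (\<lambda>y. free_mult (free_mult (gen A) y) z)"
      using A assms(3)
      by (intro free_additive_comp[OF free_additive_free_mult_left free_additive_free_mult_right]
          gen_in_free_carrier)
    show "free_additive (\<lambda>y. free_mult (gen A) (free_mult y z))"
      using A assms(3)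
      by (intro free_additive_comp[OF free_additive_free_mult_right free_additive_free_mult_left]
          gen_in_free_carrier)
    show "free_mult (free_mult (gen A) (gen B)) z - free_mult (gen A) (free_mult (gen B) z)
        \<in> burnside_relations" if "nfinite_rack B" for B
      using gens_AB[OF A that] by (simp add: free_mult_gen)
  qed (rule assms(2))
  show ?thesis
  proof (rule free_additive_eq_mod_relations[where \<phi> = "\<lambda>x. free_mult (free_mult x y) z"
        and \<psi> = "\<lambda>x. free_mult x (free_mult y z)"])
    show "free_additive (\<lambda>x. free_mult (free_mult x y) z)"
      using assms(2,3)
      by (intro free_additive_comp[OF free_additive_free_mult_left free_additive_free_mult_left])
    show "free_additive (\<lambda>x. free_mult x (free_mult y z))"
      using assms(2,3) by (intro free_additive_free_mult_left free_mult_closed)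
  qed (use gen_A assms(1) in auto)
qed

section \<open>The Burnside ring\<close>

abbreviation burnside_class :: "(nrack \<Rightarrow> int) \<Rightarrow> (nrack \<Rightarrow> int) set" where
  "burnside_class x \<equiv> burnside_relations #>\<^bsub>free_group\<^esub> x"

lemma burnside_class_eq_iff:
  assumes "x \<in> free_carrier" "y \<in> free_carrier"
  shows "burnside_class x = burnside_class y \<longleftrightarrow> x - y \<in> burnside_relations"
proof -
  have "x \<in> burnside_class x"
    using group.rcos_self[OF group_free_group _ subgroup_burnside_relations] assms(1) by simp
  then have "burnside_class x = burnside_class y \<longleftrightarrow> x \<in> burnside_class y"
    using group.repr_independence[OF group_free_group _ _ subgroup_burnside_relations] assms(2)
    by fastforce
  also have "\<dots> \<longleftrightarrow> x - y \<in> burnside_relations"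
    using subgroup.rcos_module[OF subgroup_burnside_relations group_free_group] assms
    by (simp add: inv_free_group)
  finally show ?thesis .
qed

lemma carrier_burnside_group: "carrier burnside_group = burnside_class ` free_carrier"
  by (simp add: burnside_group_def carrier_FactGroup)

lemma carrier_burnside_groupE:
  assumes "U \<in> carrier burnside_group"
  obtains x where "x \<in> free_carrier" "U = burnside_class x"
  using assms by (auto simp: carrier_burnside_group)

lemma burnside_class_mult:
  "x \<in> free_carrier \<Longrightarrow> y \<in> free_carrier \<Longrightarrow>
   burnside_class x \<otimes>\<^bsub>burnside_group\<^esub> burnside_class y = burnside_class (x + y)"
  using normal.rcos_sum[OF comm_group.subgroup_imp_normal[OF comm_group_free_group
        subgroup_burnside_relations]]
  by (simp add: burnside_group_def)

lemma comm_group_burnside_group: "comm_group burnside_group"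
  unfolding burnside_group_def
  by (rule comm_group.abelian_FactGroup[OF comm_group_free_group subgroup_burnside_relations])

(* The representatives chosen by SOME are irrelevant, see burnside_mult_class. *)
definition burnside_mult ::
    "(nrack \<Rightarrow> int) set \<Rightarrow> (nrack \<Rightarrow> int) set \<Rightarrow> (nrack \<Rightarrow> int) set" where
  "burnside_mult U V = burnside_class (free_mult (SOME x. x \<in> U) (SOME y. y \<in> V))"

lemma some_in_burnside_class:
  assumes "x \<in> free_carrier"
  shows "(SOME x'. x' \<in> burnside_class x) \<in> free_carrier"
    and "(SOME x'. x' \<in> burnside_class x) - x \<in> burnside_relations"
proof -
  have "x \<in> burnside_class x"
    using group.rcos_self[OF group_free_group _ subgroup_burnside_relations] assms by simp
  then have some: "(SOME x'. x' \<in> burnside_class x) \<in> burnside_class x"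
    by (rule someI[where P = "\<lambda>x'. x' \<in> burnside_class x"])
  then show "(SOME x'. x' \<in> burnside_class x) \<in> free_carrier"
    using subgroup.elemrcos_carrier[OF subgroup_burnside_relations group_free_group] assms by simp
  then show "(SOME x'. x' \<in> burnside_class x) - x \<in> burnside_relations"
    using subgroup.rcos_module[OF subgroup_burnside_relations group_free_group] assms some
    by (simp add: inv_free_group)
qed

lemma burnside_mult_class:
  assumes "x \<in> free_carrier" "y \<in> free_carrier"
  shows "burnside_mult (burnside_class x) (burnside_class y) = burnside_class (free_mult x y)"
proof -
  define x' where "x' = (SOME x'. x' \<in> burnside_class x)"
  define y' where "y' = (SOME y'. y' \<in> burnside_class y)"
  have x': "x' \<in> free_carrier" "x' - x \<in> burnside_relations"
    unfolding x'_def using some_in_burnside_class[OF assms(1)] by blast+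
  have y': "y' \<in> free_carrier" "y' - y \<in> burnside_relations"
    unfolding y'_def using some_in_burnside_class[OF assms(2)] by blast+
  have "free_mult x' y' - free_mult x y = free_mult (x' - x) y' + free_mult x (y' - y)"
    using assms x' y' by (simp add: free_mult_diff_left free_mult_diff_right)
  also have "\<dots> \<in> burnside_relations"
    using assms x' y'
    by (intro burnside_relations_add free_mult_relations_left free_mult_relations_right)
  finally show ?thesis
    using assms x' y' burnside_class_eq_iff free_mult_closed
    unfolding burnside_mult_def x'_def[symmetric] y'_def[symmetric] by blast
qed

lemma burnside_mult_closed:
  "U \<in> carrier burnside_group \<Longrightarrow> V \<in> carrier burnside_group \<Longrightarrow>
   burnside_mult U V \<in> carrier burnside_group"
  by (elim carrier_burnside_groupE)
    (simp add: burnside_mult_class carrier_burnside_group free_mult_closed)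

lemma burnside_mult_comm:
  "U \<in> carrier burnside_group \<Longrightarrow> V \<in> carrier burnside_group \<Longrightarrow>
   burnside_mult U V = burnside_mult V U"
  by (elim carrier_burnside_groupE)
    (simp add: burnside_mult_class burnside_class_eq_iff free_mult_closed
      free_mult_comm_mod_relations)

lemma burnside_mult_assoc:
  "U \<in> carrier burnside_group \<Longrightarrow> V \<in> carrier burnside_group \<Longrightarrow> W \<in> carrier burnside_group \<Longrightarrow>
   burnside_mult (burnside_mult U V) W = burnside_mult U (burnside_mult V W)"
  by (elim carrier_burnside_groupE)
    (simp add: burnside_mult_class burnside_class_eq_iff free_mult_closed
      free_mult_assoc_mod_relations)

lemma burnside_mult_one:
  "U \<in> carrier burnside_group \<Longrightarrow> burnside_mult (bclass star_rack) U = U"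
  by (elim carrier_burnside_groupE)
    (simp add: bclass_def burnside_mult_class burnside_class_eq_iff free_mult_closed
      gen_in_free_carrier nfinite_rack_star_rack free_mult_star_mod_relations)

lemma burnside_mult_distrib:
  "U \<in> carrier burnside_group \<Longrightarrow> V \<in> carrier burnside_group \<Longrightarrow> W \<in> carrier burnside_group \<Longrightarrow>
   burnside_mult (U \<otimes>\<^bsub>burnside_group\<^esub> V) W
     = burnside_mult U W \<otimes>\<^bsub>burnside_group\<^esub> burnside_mult V W"
  by (elim carrier_burnside_groupE)
    (simp add: burnside_class_mult burnside_mult_class free_carrier_add free_mult_closed
      free_additive_add[OF free_additive_free_mult_left])

definition burnside_ring :: "(nrack \<Rightarrow> int) set ring" where
  "burnside_ring = \<lparr>carrier = carrier burnside_group, monoid.mult = burnside_mult,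
     one = bclass star_rack, ring.zero = \<one>\<^bsub>burnside_group\<^esub>, ring.add = (\<otimes>\<^bsub>burnside_group\<^esub>)\<rparr>"

lemma add_monoid_burnside_ring: "add_monoid burnside_ring = burnside_group"
  by (rule monoid.equality) (simp_all add: burnside_ring_def)

lemma cring_burnside_ring: "cring burnside_ring"
proof (rule cringI)
  show "abelian_group burnside_ring"
    unfolding abelian_group_def abelian_monoid_def abelian_group_axioms_def
      add_monoid_burnside_ring
    using comm_group_burnside_group by (simp add: comm_group_def)
  have "bclass star_rack \<in> carrier burnside_group"
    by (simp add: bclass_def carrier_burnside_group gen_in_free_carrier nfinite_rack_star_rack)
  then show "comm_monoid burnside_ring"
    by (intro comm_monoidI)
      (simp_all add: burnside_ring_def burnside_mult_closed burnside_mult_assoc burnside_mult_one,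
        rule burnside_mult_comm)
qed (simp add: burnside_ring_def burnside_mult_distrib)

theorem proposition3p15:
  shows "\<exists>mul. cring \<lparr>carrier = carrier burnside_group, monoid.mult = mul,
                       one = bclass star_rack,
                       ring.zero = one burnside_group, ring.add = monoid.mult burnside_group\<rparr>
             \<and> (\<forall>R R'. nfinite_rack R \<longrightarrow> nfinite_rack R' \<longrightarrow>
                   mul (bclass R') (bclass R) = bclass (nrack_prod R' R))"
proof (intro exI conjI allI impI)
  show "cring \<lparr>carrier = carrier burnside_group, monoid.mult = burnside_mult,
                       one = bclass star_rack,
                       ring.zero = one burnside_group, ring.add = monoid.mult burnside_group\<rparr>"
    using cring_burnside_ring by (simp add: burnside_ring_def)
  show "burnside_mult (bclass R') (bclass R) = bclass (nrack_prod R' R)"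
    if "nfinite_rack R" "nfinite_rack R'" for R R'
    using that by (simp add: bclass_def burnside_mult_class gen_in_free_carrier free_mult_gen)
qed

end
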